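(* Let $p,q,n$ be positive integers and let $C_{p,q,n}$ be the group with generators $P,Q$ and defining relations $P^p=Q^q=(PQ)^n=1$, $P^2Q=QP^2$, $PQ^2=Q^2P$; suppose that $PQ\neq QP$ in $C_{p,q,n}$. Then $p$ and $q$ are even and $P^{2n}Q^{2n}=1$. Moreover $C_{p,q,n}=C_{p',q',n}$ (i.e. $P^{p'}=Q^{q'}=1$ in $C_{p,q,n}$), where $p'=(p,[q,2n])$ and $q'=(q,[p,2n])$, with $(\cdot,\cdot)$ the greatest common divisor and $[\cdot,\cdot]$ the least common multiple. The case in which both $p'=q'\equiv 2\pmod 4$ and $n=2$ does not occur, and $|C_{p,q,n}|=p'(q',2n)n/2$. Finally, the subgroup $S=\langle P^2,Q^2\rangle$ is abelian and central in $C_{p,q,n}$, of order $|S|=p'(q',2n)/4$, and $C_{p,q,n}/S\cong D_n$, the dihedral group of order $2n$. *)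

theory Defs
  imports "HOL-Algebra.Algebra"
begin

text \<open>A letter is a pair (g, i): g = False means generator P, g = True means Q;
  i = True means the inverse of that generator. Words are lists of letters.\<close>

type_synonym letter = "bool \<times> bool"
type_synonym word = "letter list"

definition inv_letter :: "letter \<Rightarrow> letter" where
  "inv_letter x = (fst x, \<not> snd x)"

definition inv_word :: "word \<Rightarrow> word" where
  "inv_word w = rev (map inv_letter w)"

inductive pres_eq :: "word set \<Rightarrow> word \<Rightarrow> word \<Rightarrow> bool" for R where
  refl: "pres_eq R w w"
| sym: "pres_eq R u v \<Longrightarrow> pres_eq R v u"
| trans: "pres_eq R u v \<Longrightarrow> pres_eq R v w \<Longrightarrow> pres_eq R u w"
| cancel: "pres_eq R (u @ [x, inv_letter x] @ v) (u @ v)"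
| relator: "r \<in> R \<Longrightarrow> pres_eq R (u @ r @ v) (u @ v)"

definition pres_rel :: "word set \<Rightarrow> (word \<times> word) set" where
  "pres_rel R = {(u, v). pres_eq R u v}"

definition presented_group :: "word set \<Rightarrow> word set monoid" where
  "presented_group R =
     \<lparr> carrier = UNIV // pres_rel R,
       monoid.mult = (\<lambda>A B. pres_rel R `` {(SOME a. a \<in> A) @ (SOME b. b \<in> B)}),
       monoid.one = pres_rel R `` {[]} \<rparr>"

definition gen_P :: letter where "gen_P = (False, False)"
definition gen_Q :: letter where "gen_Q = (True, False)"

definition word_class :: "word set \<Rightarrow> word \<Rightarrow> word set" where
  "word_class R w = pres_rel R `` {w}"

definition C_relators :: "nat \<Rightarrow> nat \<Rightarrow> nat \<Rightarrow> word set" where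
  "C_relators p q n =
     { replicate p gen_P,
       replicate q gen_Q,
       concat (replicate n [gen_P, gen_Q]),
       [gen_P, gen_P, gen_Q] @ inv_word [gen_Q, gen_P, gen_P],
       [gen_P, gen_Q, gen_Q] @ inv_word [gen_Q, gen_Q, gen_P] }"

definition C_group :: "nat \<Rightarrow> nat \<Rightarrow> nat \<Rightarrow> word set monoid" where
  "C_group p q n = presented_group (C_relators p q n)"

definition C_P :: "nat \<Rightarrow> nat \<Rightarrow> nat \<Rightarrow> word set" where
  "C_P p q n = word_class (C_relators p q n) [gen_P]"

definition C_Q :: "nat \<Rightarrow> nat \<Rightarrow> nat \<Rightarrow> word set" where
  "C_Q p q n = word_class (C_relators p q n) [gen_Q]"

text \<open>Elements (a, s) stand for r^a s^[s] with r a rotation of order n and s a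
  reflection; (a,s)(b,t) = (a + (-1)^s b mod n, s xor t).\<close>

definition dihedral_group :: "nat \<Rightarrow> (int \<times> bool) monoid" where
  "dihedral_group n =
     \<lparr> carrier = {0..<int n} \<times> UNIV,
       monoid.mult = (\<lambda>(a, s) (b, t). ((a + (if s then - b else b)) mod int n, s \<noteq> t)),
       monoid.one = (0, False) \<rparr>"

end

theory Submission
  imports Defs
begin

text \<open>Write \<open>a = P\<^sup>2\<close>, \<open>b = Q\<^sup>2\<close> and \<open>x = PQ\<close>. The last two relations make \<open>a\<close> and \<open>b\<close>
  central, and then \<open>P x P\<^sup>-\<^sup>1 = a b x\<^sup>-\<^sup>1\<close>, so every element is \<open>a\<^sup>i b\<^sup>j x\<^sup>k P\<^sup>e\<close> and products
  of such normal forms follow an explicit rule on \<open>(i, j, k, e)\<close>. For \<open>p = 2A\<close> and \<open>q = 2B\<close>,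
  mapping words to these coordinates shows that two tuples give the same element exactly when
  \<open>e\<close> agrees, \<open>k\<close> agrees modulo \<open>n\<close>, and \<open>(i, j)\<close> agrees modulo the lattice spanned by
  \<open>(A, 0)\<close>, \<open>(0, B)\<close> and \<open>(n, n)\<close>. Counting residues gives
  \<open>|C| = 2n gcd(A, lcm(B, n)) gcd(B, n)\<close>. The elements \<open>a\<^sup>i b\<^sup>j\<close> form the central subgroup
  \<open>S\<close>, and \<open>(k mod n, e)\<close> defines a homomorphism onto the dihedral group with kernel \<open>S\<close>.\<close>

lemma lcm_eq_div_gcd_mult: "lcm (m::nat) k = m div gcd m k * k"
  by (metis div_mult_swap gcd_dvd1 lcm_nat_def mult.commute)

lemma eq_if_dvd_diff_in_range:
  fixes a b m :: int
  shows "0 \<le> a \<Longrightarrow> a < m \<Longrightarrow> 0 \<le> b \<Longrightarrow> b < m \<Longrightarrow> m dvd a - b \<Longrightarrow> a = b"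
  by (metis mod_eq_dvd_iff mod_pos_pos_trivial)

definition central :: "('a, 'b) monoid_scheme \<Rightarrow> 'a \<Rightarrow> bool" where
  "central G z \<longleftrightarrow> z \<in> carrier G \<and> (\<forall>y\<in>carrier G. z \<otimes>\<^bsub>G\<^esub> y = y \<otimes>\<^bsub>G\<^esub> z)"

lemma centralD: "central G z \<Longrightarrow> y \<in> carrier G \<Longrightarrow> z \<otimes>\<^bsub>G\<^esub> y = y \<otimes>\<^bsub>G\<^esub> z"
  unfolding central_def by blast

lemma central_in_carrier: "central G z \<Longrightarrow> z \<in> carrier G"
  by (simp add: central_def)

lemma (in group) inv_commute:
  assumes u: "u \<in> carrier G" and v: "v \<in> carrier G" and uv: "u \<otimes> v = v \<otimes> u"
  shows "inv u \<otimes> v = v \<otimes> inv u"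
proof -
  have "inv u \<otimes> v = inv u \<otimes> (v \<otimes> u) \<otimes> inv u"
    using u v by (simp add: m_assoc)
  also have "\<dots> = v \<otimes> inv u"
    using u v by (simp flip: uv add: m_assoc[symmetric])
  finally show ?thesis .
qed

lemma (in group) int_pow_commute:
  assumes u: "u \<in> carrier G" and v: "v \<in> carrier G" and uv: "u \<otimes> v = v \<otimes> u"
  shows "u [^] (i::int) \<otimes> v = v \<otimes> u [^] i"
proof (cases i rule: int_cases2)
  case (nonneg m)
  then show ?thesis using group_commutes_pow[OF uv u v] by (simp add: int_pow_int)
next
  case (nonpos m)
  then show ?thesis
    using inv_commute[OF nat_pow_closed[OF u] v group_commutes_pow[OF uv u v]]
    by (simp add: int_pow_neg_int u)
qed

lemma (in group) central_int_pow:
  assumes z: "central G z"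
  shows "central G (z [^] (i::int))"
proof -
  have "z [^] i \<otimes> y = y \<otimes> z [^] i" if "y \<in> carrier G" for y
    by (rule int_pow_commute[OF central_in_carrier[OF z] that centralD[OF z that]])
  then show ?thesis
    unfolding central_def using central_in_carrier[OF z] by blast
qed

lemma (in group) central_mult:
  assumes z: "central G z" and w: "central G w"
  shows "central G (z \<otimes> w)"
proof -
  have zw: "z \<in> carrier G" "w \<in> carrier G"
    using z w by (simp_all add: central_in_carrier)
  have "z \<otimes> w \<otimes> y = y \<otimes> (z \<otimes> w)" if y: "y \<in> carrier G" for y
  proof -
    have "z \<otimes> w \<otimes> y = z \<otimes> (y \<otimes> w)" by (simp add: zw y m_assoc centralD[OF w y, symmetric])
    also have "\<dots> = y \<otimes> (z \<otimes> w)" by (simp add: zw y m_assoc[symmetric] centralD[OF z y, symmetric])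
    finally show ?thesis .
  qed
  with zw show ?thesis
    unfolding central_def by blast
qed

text \<open>If \<open>x\<^sup>p = 1\<close> with \<open>p\<close> odd, then \<open>x = x\<^sup>p\<^sup>+\<^sup>1\<close> is a power of \<open>x\<^sup>2\<close>.\<close>

lemma (in group) commute_if_square_commutes_odd_pow:
  fixes p :: nat
  assumes x: "x \<in> carrier G" and y: "y \<in> carrier G"
    and "odd p" and "x [^] p = \<one>" and xxy: "x \<otimes> x \<otimes> y = y \<otimes> (x \<otimes> x)"
  shows "x \<otimes> y = y \<otimes> x"
proof -
  obtain m where p: "p = 2 * m + 1"
    using \<open>odd p\<close> by (rule oddE)
  have "x = x [^] p \<otimes> x"
    using assms by simp
  also have "\<dots> = x [^] (2 * (m + 1))"
    by (simp add: p)
  also have "\<dots> = (x [^] (2::nat)) [^] (m + 1)"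
    by (rule nat_pow_pow[symmetric]) (rule x)
  also have "\<dots> = (x \<otimes> x) [^] (m + 1)"
    by (simp add: numeral_2_eq_2 x)
  finally have "x = (x \<otimes> x) [^] (m + 1)" .
  then show ?thesis
    using group_commutes_pow[OF xxy] x y by (metis m_closed)
qed

lemma pres_eq_in_context: "pres_eq R u v \<Longrightarrow> pres_eq R (w @ u @ z) (w @ v @ z)"
proof (induction rule: pres_eq.induct)
  case (refl w) then show ?case by (rule pres_eq.refl)
next
  case (sym u v) then show ?case by (blast intro: pres_eq.sym)
next
  case (trans u v w) then show ?case by (metis pres_eq.trans)
next
  case (cancel u x v)
  from pres_eq.cancel[of R "w @ u" x "v @ z"] show ?case by simp
next
  case (relator r u v)
  from pres_eq.relator[OF relator, of "w @ u" "v @ z"] show ?case by simp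
qed

lemma pres_eq_append: "pres_eq R u u' \<Longrightarrow> pres_eq R v v' \<Longrightarrow> pres_eq R (u @ v) (u' @ v')"
  using pres_eq_in_context[of R u u' "[]" v] pres_eq_in_context[of R v v' u' "[]"]
  by (auto intro: pres_eq.trans)

lemma inv_letter_inv_letter [simp]: "inv_letter (inv_letter x) = x"
  by (simp add: inv_letter_def)

lemma pres_eq_inv_word_append: "pres_eq R (inv_word w @ w) []"
proof (induction w)
  case Nil then show ?case by (simp add: inv_word_def pres_eq.refl)
next
  case (Cons x w)
  have "inv_word (x # w) @ x # w = inv_word w @ [inv_letter x, inv_letter (inv_letter x)] @ w"
    by (simp add: inv_word_def)
  then have "pres_eq R (inv_word (x # w) @ x # w) (inv_word w @ w)"
    using pres_eq.cancel[of R "inv_word w" "inv_letter x" w] by simp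
  with Cons show ?case by (blast intro: pres_eq.trans)
qed

lemma equiv_pres_rel: "equiv UNIV (pres_rel R)"
  unfolding equiv_def refl_on_def sym_def trans_def pres_rel_def
  by (auto intro: pres_eq.refl pres_eq.sym pres_eq.trans)

lemma word_class_eq_iff: "word_class R u = word_class R v \<longleftrightarrow> pres_eq R u v"
  using eq_equiv_class_iff[OF equiv_pres_rel, of u v]
  by (simp add: word_class_def pres_rel_def)

lemma in_word_class_iff: "w \<in> word_class R u \<longleftrightarrow> pres_eq R u w"
  by (simp add: word_class_def pres_rel_def)

lemma carrier_presented_group: "carrier (presented_group R) = range (word_class R)"
  by (auto simp: presented_group_def quotient_def word_class_def)

lemma word_class_in_carrier [simp]: "word_class R w \<in> carrier (presented_group R)"
  by (simp add: carrier_presented_group)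

lemma one_presented_group: "\<one>\<^bsub>presented_group R\<^esub> = word_class R []"
  by (simp add: presented_group_def word_class_def)

lemma word_class_append:
  "word_class R (u @ v) = word_class R u \<otimes>\<^bsub>presented_group R\<^esub> word_class R v"
proof -
  have some_in_class: "pres_eq R w (SOME w'. w' \<in> word_class R w)" for w
    using someI[of "\<lambda>w'. w' \<in> word_class R w" w] by (simp add: in_word_class_iff pres_eq.refl)
  have "pres_eq R (u @ v) ((SOME u'. u' \<in> word_class R u) @ (SOME v'. v' \<in> word_class R v))"
    by (rule pres_eq_append[OF some_in_class some_in_class])
  then show ?thesis
    by (simp add: presented_group_def word_class_eq_iff flip: word_class_def)
qed

lemma group_presented_group: "group (presented_group R)"
proof (rule groupI)
  fix x assume "x \<in> carrier (presented_group R)"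
  then obtain u where x: "x = word_class R u" by (auto simp: carrier_presented_group)
  show "\<exists>y\<in>carrier (presented_group R). y \<otimes>\<^bsub>presented_group R\<^esub> x = \<one>\<^bsub>presented_group R\<^esub>"
    by (rule bexI[of _ "word_class R (inv_word u)"])
       (simp_all add: x one_presented_group word_class_eq_iff pres_eq_inv_word_append
         flip: word_class_append)
qed (auto simp: carrier_presented_group one_presented_group simp flip: word_class_append)

lemma word_class_replicate:
  "word_class R (replicate m l) = word_class R [l] [^]\<^bsub>presented_group R\<^esub> m"
proof (induction m)
  case 0 then show ?case by (simp add: one_presented_group)
next
  case (Suc m)
  interpret group "presented_group R" by (rule group_presented_group)
  have "word_class R (replicate (Suc m) l) = word_class R [l] \<otimes>\<^bsub>presented_group R\<^esub> word_class R (replicate m l)"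
    using word_class_append[of R "[l]" "replicate m l"] by simp
  with Suc show ?case by (metis nat_pow_Suc2 word_class_in_carrier)
qed

lemma word_class_inv_letter:
  "word_class R [inv_letter l] = inv\<^bsub>presented_group R\<^esub> word_class R [l]"
proof -
  interpret group "presented_group R" by (rule group_presented_group)
  have "pres_eq R ([] @ [inv_letter l, inv_letter (inv_letter l)] @ []) ([] @ [])"
    by (rule pres_eq.cancel)
  then have "word_class R [inv_letter l] \<otimes>\<^bsub>presented_group R\<^esub> word_class R [l] = \<one>\<^bsub>presented_group R\<^esub>"
    by (simp add: one_presented_group word_class_eq_iff flip: word_class_append)
  then show ?thesis by (intro inv_equality[symmetric]) auto
qed

lemma word_class_relator: "r \<in> R \<Longrightarrow> word_class R r = \<one>\<^bsub>presented_group R\<^esub>"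
  using pres_eq.relator[of r R "[]" "[]"] by (simp add: one_presented_group word_class_eq_iff)

lemma word_class_eq_if_relator:
  assumes "u @ inv_word v \<in> R"
  shows "word_class R u = word_class R v"
proof -
  have "pres_eq R ([] @ (u @ inv_word v) @ v) ([] @ v)" by (rule pres_eq.relator[OF assms])
  moreover have "pres_eq R (u @ (inv_word v @ v) @ []) (u @ [] @ [])"
    by (rule pres_eq_in_context[OF pres_eq_inv_word_append])
  ultimately show ?thesis
    by (simp add: word_class_eq_iff) (meson pres_eq.sym pres_eq.trans)
qed

lemma word_class_letter_cases:
  "word_class R [l] \<in> {word_class R [gen_P], word_class R [gen_Q],
     inv\<^bsub>presented_group R\<^esub> word_class R [gen_P], inv\<^bsub>presented_group R\<^esub> word_class R [gen_Q]}"
proof -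
  have "l \<in> {gen_P, gen_Q, inv_letter gen_P, inv_letter gen_Q}"
    by (cases l) (auto simp: gen_P_def gen_Q_def inv_letter_def)
  then show ?thesis by (auto simp: word_class_inv_letter)
qed

lemma central_presented_groupI:
  assumes z: "z \<in> carrier (presented_group R)"
    and zP: "z \<otimes>\<^bsub>presented_group R\<^esub> word_class R [gen_P] = word_class R [gen_P] \<otimes>\<^bsub>presented_group R\<^esub> z"
    and zQ: "z \<otimes>\<^bsub>presented_group R\<^esub> word_class R [gen_Q] = word_class R [gen_Q] \<otimes>\<^bsub>presented_group R\<^esub> z"
  shows "central (presented_group R) z"
proof -
  interpret group "presented_group R" by (rule group_presented_group)
  have letter: "z \<otimes>\<^bsub>presented_group R\<^esub> word_class R [l] = word_class R [l] \<otimes>\<^bsub>presented_group R\<^esub> z" for l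
    using word_class_letter_cases[of R l] zP zQ z
      inv_commute[OF word_class_in_carrier z zP[symmetric]] inv_commute[OF word_class_in_carrier z zQ[symmetric]]
    by auto
  have "z \<otimes>\<^bsub>presented_group R\<^esub> word_class R w = word_class R w \<otimes>\<^bsub>presented_group R\<^esub> z" for w
  proof (induction w)
    case Nil then show ?case using z by (simp flip: one_presented_group)
  next
    case (Cons l w)
    have "word_class R (l # w) = word_class R [l] \<otimes>\<^bsub>presented_group R\<^esub> word_class R w"
      using word_class_append[of R "[l]" w] by simp
    with Cons letter[of l] z show ?case by (simp add: m_assoc) (metis m_assoc word_class_in_carrier)
  qed
  with z show ?thesis by (auto simp: central_def carrier_presented_group)
qed

lemma group_dihedral_group:
  assumes n: "n > 0"
  shows "group (dihedral_group n)"
proof (rule groupI)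
  let ?D = "dihedral_group n"
  have mult: "(a, s) \<otimes>\<^bsub>?D\<^esub> (b, t) = ((a + (if s then - b else b)) mod int n, s \<noteq> t)" for a s b t
    by (simp add: dihedral_group_def)
  have carrier: "carrier ?D = {0..<int n} \<times> UNIV"
    by (simp add: dihedral_group_def)
  show "x \<otimes>\<^bsub>?D\<^esub> y \<in> carrier ?D" if "x \<in> carrier ?D" "y \<in> carrier ?D" for x y
    using n that by (auto simp: carrier mult)
  show "\<one>\<^bsub>?D\<^esub> \<in> carrier ?D"
    using n by (simp add: dihedral_group_def)
  show "x \<otimes>\<^bsub>?D\<^esub> y \<otimes>\<^bsub>?D\<^esub> z = x \<otimes>\<^bsub>?D\<^esub> (y \<otimes>\<^bsub>?D\<^esub> z)" for x y z
  proof -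
    obtain a s b t d u where xyz: "x = (a, s)" "y = (b, t)" "z = (d, u)"
      by (cases x, cases y, cases z)
    show ?thesis
      unfolding xyz mult
      by (cases s; cases t; cases u)
         (simp_all add: mod_add_left_eq mod_add_right_eq mod_diff_left_eq mod_diff_right_eq
           algebra_simps flip: diff_conv_add_uminus)
  qed
  show "\<one>\<^bsub>?D\<^esub> \<otimes>\<^bsub>?D\<^esub> x = x" if "x \<in> carrier ?D" for x
    using that by (auto simp: dihedral_group_def)
  show "\<exists>y\<in>carrier ?D. y \<otimes>\<^bsub>?D\<^esub> x = \<one>\<^bsub>?D\<^esub>" if x: "x \<in> carrier ?D" for x
  proof -
    obtain a s where a: "x = (a, s)" by (cases x)
    show ?thesis
    proof (cases s)
      case True
      with x show ?thesis by (intro bexI[of _ x]) (auto simp: a dihedral_group_def)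
    next
      case False
      with x n show ?thesis
        by (intro bexI[of _ "((- a) mod int n, False)"]) (auto simp: a dihedral_group_def mod_add_left_eq)
    qed
  qed
qed

section \<open>Coordinates\<close>

text \<open>A coordinate tuple \<open>(i, j, k, e)\<close> stands for \<open>P\<^sup>2\<^sup>i Q\<^sup>2\<^sup>j (PQ)\<^sup>k P\<^sup>e\<close>.\<close>

type_synonym coord = "int \<times> int \<times> int \<times> bool"

definition coord_mult :: "coord \<Rightarrow> coord \<Rightarrow> coord" where
  "coord_mult s t = (case s of (i, j, k, e) \<Rightarrow> case t of (i', j', k', e') \<Rightarrow>
     if e then (i + i' + k' + (if e' then 1 else 0), j + j' + k', k - k', \<not> e')
     else (i + i', j + j', k + k', e'))"

definition coord_one :: coord where
  "coord_one = (0, 0, 0, False)"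

text \<open>\<open>P\<^sup>-\<^sup>1 = P\<^sup>-\<^sup>2 P\<close>, \<open>Q = Q\<^sup>2 (PQ)\<^sup>-\<^sup>1 P\<close> and \<open>Q\<^sup>-\<^sup>1 = (PQ)\<^sup>-\<^sup>1 P\<close>.\<close>

definition letter_coord :: "letter \<Rightarrow> coord" where
  "letter_coord l =
     (if \<not> fst l then (if \<not> snd l then (0, 0, 0, True) else (-1, 0, 0, True))
      else (if \<not> snd l then (0, 1, -1, True) else (0, 0, -1, True)))"

definition word_coord :: "word \<Rightarrow> coord" where
  "word_coord w = foldr (\<lambda>l. coord_mult (letter_coord l)) w coord_one"

lemma coord_mult_simps [simp]:
  "coord_mult (i, j, k, False) (i', j', k', e') = (i + i', j + j', k + k', e')"
  "coord_mult (i, j, k, True) (i', j', k', e') =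
     (i + i' + k' + (if e' then 1 else 0), j + j' + k', k - k', \<not> e')"
  by (simp_all add: coord_mult_def)

lemma coord_mult_assoc: "coord_mult (coord_mult s t) u = coord_mult s (coord_mult t u)"
  by (cases s; cases t; cases u) (auto simp: coord_mult_def)

lemma coord_mult_one [simp]: "coord_mult coord_one t = t" "coord_mult t coord_one = t"
  by (cases t; simp add: coord_mult_def coord_one_def)+

lemma word_coord_Nil [simp]: "word_coord [] = coord_one"
  by (simp add: word_coord_def)

lemma word_coord_Cons [simp]: "word_coord (l # w) = coord_mult (letter_coord l) (word_coord w)"
  by (simp add: word_coord_def)

lemma word_coord_append: "word_coord (u @ v) = coord_mult (word_coord u) (word_coord v)"
  by (induction u) (simp_all add: coord_mult_assoc)

lemma letter_coord_mult_inv_letter: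
  "coord_mult (letter_coord l) (letter_coord (inv_letter l)) = coord_one"
  by (cases l) (auto simp: letter_coord_def inv_letter_def coord_one_def)

lemma letter_coord_P: "letter_coord gen_P = (0, 0, 0, True)"
  by (simp add: letter_coord_def gen_P_def)

lemma word_coord_P_power: "word_coord (replicate (2 * m) gen_P) = (int m, 0, 0, False)"
proof (induction m)
  case 0 then show ?case by (simp add: coord_one_def)
next
  case (Suc m)
  have "replicate (2 * Suc m) gen_P = gen_P # gen_P # replicate (2 * m) gen_P" by simp
  with Suc show ?case by (simp add: letter_coord_def gen_P_def)
qed

lemma word_coord_Q_power: "word_coord (replicate (2 * m) gen_Q) = (0, int m, 0, False)"
proof (induction m)
  case 0 then show ?case by (simp add: coord_one_def)
next
  case (Suc m)
  have "replicate (2 * Suc m) gen_Q = gen_Q # gen_Q # replicate (2 * m) gen_Q" by simp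
  with Suc show ?case by (simp add: letter_coord_def gen_Q_def)
qed

lemma word_coord_PQ_power: "word_coord (concat (replicate m [gen_P, gen_Q])) = (0, 0, int m, False)"
  by (induction m) (auto simp: coord_one_def letter_coord_def gen_P_def gen_Q_def)

lemma word_coord_P2_commutator: "word_coord ([gen_P, gen_P, gen_Q] @ inv_word [gen_Q, gen_P, gen_P]) = coord_one"
  by (simp add: inv_word_def letter_coord_def gen_P_def gen_Q_def inv_letter_def coord_one_def)

lemma word_coord_Q2_commutator: "word_coord ([gen_P, gen_Q, gen_Q] @ inv_word [gen_Q, gen_Q, gen_P]) = coord_one"
  by (simp add: inv_word_def letter_coord_def gen_P_def gen_Q_def inv_letter_def coord_one_def)

definition coord_word :: "coord \<Rightarrow> word" where
  "coord_word t = (case t of (i, j, k, e) \<Rightarrow>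
     replicate (2 * nat i) gen_P @ replicate (2 * nat j) gen_Q @
     concat (replicate (nat k) [gen_P, gen_Q]) @ (if e then [gen_P] else []))"

lemma word_coord_coord_word:
  "0 \<le> i \<Longrightarrow> 0 \<le> j \<Longrightarrow> 0 \<le> k \<Longrightarrow> word_coord (coord_word (i, j, k, e)) = (i, j, k, e)"
  by (simp add: coord_word_def word_coord_append word_coord_P_power word_coord_Q_power
      word_coord_PQ_power letter_coord_P coord_one_def)

section \<open>Normal form of the elements of \<open>C\<^sub>p\<^sub>,\<^sub>q\<^sub>,\<^sub>n\<close>\<close>

locale C_pres =
  fixes p q n :: nat
begin

abbreviation "R \<equiv> C_relators p q n"
abbreviation "G \<equiv> C_group p q n"
abbreviation "P \<equiv> C_P p q n"
abbreviation "Q \<equiv> C_Q p q n"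
abbreviation "P2 \<equiv> P \<otimes>\<^bsub>G\<^esub> P"
abbreviation "Q2 \<equiv> Q \<otimes>\<^bsub>G\<^esub> Q"
abbreviation "PQ \<equiv> P \<otimes>\<^bsub>G\<^esub> Q"

sublocale G: group G
  unfolding C_group_def by (rule group_presented_group)

lemma P_in_carrier [simp]: "P \<in> carrier G" and Q_in_carrier [simp]: "Q \<in> carrier G"
  by (simp_all add: C_group_def C_P_def C_Q_def)

lemma P_pow_two: "P [^]\<^bsub>G\<^esub> (2::nat) = P2"
  by (simp add: numeral_2_eq_2)

lemma Q_pow_two: "Q [^]\<^bsub>G\<^esub> (2::nat) = Q2"
  by (simp add: numeral_2_eq_2)

lemma word_class_in_carrier_G [simp]: "word_class R w \<in> carrier G"
  by (simp add: C_group_def)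

lemma word_class_mult: "word_class R (u @ v) = word_class R u \<otimes>\<^bsub>G\<^esub> word_class R v"
  by (simp add: C_group_def word_class_append)

lemma word_class_relator_G: "r \<in> R \<Longrightarrow> word_class R r = \<one>\<^bsub>G\<^esub>"
  by (simp add: C_group_def word_class_relator)

lemma P_pow_p: "P [^]\<^bsub>G\<^esub> p = \<one>\<^bsub>G\<^esub>"
proof -
  have "word_class R (replicate p gen_P) = \<one>\<^bsub>G\<^esub>"
    by (rule word_class_relator_G) (simp add: C_relators_def)
  then show ?thesis by (simp add: C_group_def C_P_def word_class_replicate)
qed

lemma Q_pow_q: "Q [^]\<^bsub>G\<^esub> q = \<one>\<^bsub>G\<^esub>"
proof -
  have "word_class R (replicate q gen_Q) = \<one>\<^bsub>G\<^esub>"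
    by (rule word_class_relator_G) (simp add: C_relators_def)
  then show ?thesis by (simp add: C_group_def C_Q_def word_class_replicate)
qed

lemma word_class_PQ_power: "word_class R (concat (replicate m [gen_P, gen_Q])) = (P \<otimes>\<^bsub>G\<^esub> Q) [^]\<^bsub>G\<^esub> m"
proof (induction m)
  case 0 then show ?case by (simp add: C_group_def one_presented_group)
next
  case (Suc m)
  have "word_class R (concat (replicate (Suc m) [gen_P, gen_Q])) =
        P \<otimes>\<^bsub>G\<^esub> Q \<otimes>\<^bsub>G\<^esub> word_class R (concat (replicate m [gen_P, gen_Q]))"
    using word_class_mult[of "[gen_P]" "[gen_Q] @ concat (replicate m [gen_P, gen_Q])"]
      word_class_mult[of "[gen_Q]" "concat (replicate m [gen_P, gen_Q])"]
    by (simp add: C_P_def C_Q_def G.m_assoc)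
  with Suc show ?case by (metis G.nat_pow_Suc2 G.m_closed P_in_carrier Q_in_carrier)
qed

lemma PQ_pow_n: "(P \<otimes>\<^bsub>G\<^esub> Q) [^]\<^bsub>G\<^esub> n = \<one>\<^bsub>G\<^esub>"
proof -
  have "word_class R (concat (replicate n [gen_P, gen_Q])) = \<one>\<^bsub>G\<^esub>"
    by (rule word_class_relator_G) (simp add: C_relators_def)
  then show ?thesis by (simp add: word_class_PQ_power)
qed

lemma word_class_three_letters:
  "word_class R [l1, l2, l3] = word_class R [l1] \<otimes>\<^bsub>G\<^esub> word_class R [l2] \<otimes>\<^bsub>G\<^esub> word_class R [l3]"
  using word_class_mult[of "[l1]" "[l2]"] word_class_mult[of "[l1, l2]" "[l3]"] by simp

lemma P2_Q_commute: "P \<otimes>\<^bsub>G\<^esub> P \<otimes>\<^bsub>G\<^esub> Q = Q \<otimes>\<^bsub>G\<^esub> P \<otimes>\<^bsub>G\<^esub> P"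
proof -
  have "word_class R [gen_P, gen_P, gen_Q] = word_class R [gen_Q, gen_P, gen_P]"
    by (rule word_class_eq_if_relator) (simp add: C_relators_def)
  then show ?thesis by (simp add: word_class_three_letters C_P_def C_Q_def)
qed

lemma P_Q2_commute: "P \<otimes>\<^bsub>G\<^esub> Q \<otimes>\<^bsub>G\<^esub> Q = Q \<otimes>\<^bsub>G\<^esub> Q \<otimes>\<^bsub>G\<^esub> P"
proof -
  have "word_class R [gen_P, gen_Q, gen_Q] = word_class R [gen_Q, gen_Q, gen_P]"
    by (rule word_class_eq_if_relator) (simp add: C_relators_def)
  then show ?thesis by (simp add: word_class_three_letters C_P_def C_Q_def)
qed

lemma even_p_if_noncommuting:
  assumes "P \<otimes>\<^bsub>G\<^esub> Q \<noteq> Q \<otimes>\<^bsub>G\<^esub> P"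
  shows "even p"
proof (rule ccontr)
  assume "odd p"
  have "P \<otimes>\<^bsub>G\<^esub> Q = Q \<otimes>\<^bsub>G\<^esub> P"
    by (rule G.commute_if_square_commutes_odd_pow[OF P_in_carrier Q_in_carrier \<open>odd p\<close> P_pow_p])
       (use P2_Q_commute in \<open>simp add: G.m_assoc\<close>)
  with assms show False ..
qed

lemma even_q_if_noncommuting:
  assumes "P \<otimes>\<^bsub>G\<^esub> Q \<noteq> Q \<otimes>\<^bsub>G\<^esub> P"
  shows "even q"
proof (rule ccontr)
  assume "odd q"
  have "Q \<otimes>\<^bsub>G\<^esub> P = P \<otimes>\<^bsub>G\<^esub> Q"
    by (rule G.commute_if_square_commutes_odd_pow[OF Q_in_carrier P_in_carrier \<open>odd q\<close> Q_pow_q])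
       (use P_Q2_commute in \<open>simp add: G.m_assoc\<close>)
  with assms show False by simp
qed

lemma central_P2: "central G P2"
  unfolding C_group_def
  by (rule central_presented_groupI)
     (simp_all add: G.m_assoc P2_Q_commute[simplified G.m_assoc P_in_carrier Q_in_carrier]
       flip: C_group_def C_P_def C_Q_def)

lemma central_Q2: "central G Q2"
  unfolding C_group_def
  by (rule central_presented_groupI)
     (simp_all add: G.m_assoc P_Q2_commute[simplified G.m_assoc P_in_carrier Q_in_carrier, symmetric]
       flip: C_group_def C_P_def C_Q_def)

lemma central_P2Q2: "central G (P2 \<otimes>\<^bsub>G\<^esub> Q2)"
  by (rule G.central_mult[OF central_P2 central_Q2])

lemma P_mult_PQ: "P \<otimes>\<^bsub>G\<^esub> PQ = P2 \<otimes>\<^bsub>G\<^esub> Q2 \<otimes>\<^bsub>G\<^esub> inv\<^bsub>G\<^esub> PQ \<otimes>\<^bsub>G\<^esub> P"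
proof -
  have "P2 \<otimes>\<^bsub>G\<^esub> Q2 \<otimes>\<^bsub>G\<^esub> inv\<^bsub>G\<^esub> PQ \<otimes>\<^bsub>G\<^esub> P =
        P \<otimes>\<^bsub>G\<^esub> P \<otimes>\<^bsub>G\<^esub> (Q \<otimes>\<^bsub>G\<^esub> (Q \<otimes>\<^bsub>G\<^esub> inv\<^bsub>G\<^esub> Q) \<otimes>\<^bsub>G\<^esub> (inv\<^bsub>G\<^esub> P \<otimes>\<^bsub>G\<^esub> P))"
    by (simp add: G.m_assoc G.inv_mult_group)
  then show ?thesis by (simp add: G.m_assoc)
qed

text \<open>Conjugation by \<open>P\<close> sends \<open>PQ\<close> to \<open>P\<^sup>2 Q\<^sup>2 (PQ)\<^sup>-\<^sup>1\<close>, a product of commuting factors.\<close>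

lemma P_mult_PQ_pow: "P \<otimes>\<^bsub>G\<^esub> PQ [^]\<^bsub>G\<^esub> k = (P2 \<otimes>\<^bsub>G\<^esub> Q2) [^]\<^bsub>G\<^esub> k \<otimes>\<^bsub>G\<^esub> PQ [^]\<^bsub>G\<^esub> (- k) \<otimes>\<^bsub>G\<^esub> P"
  for k :: int
proof -
  define conj where "conj y = P \<otimes>\<^bsub>G\<^esub> y \<otimes>\<^bsub>G\<^esub> inv\<^bsub>G\<^esub> P" for y
  have cancel: "inv\<^bsub>G\<^esub> P \<otimes>\<^bsub>G\<^esub> (P \<otimes>\<^bsub>G\<^esub> w) = w" if "w \<in> carrier G" for w
    using that by (simp flip: G.m_assoc)
  have conj_hom: "conj \<in> hom G G"
    unfolding hom_def conj_def by (simp add: G.m_assoc cancel)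
  have "conj PQ = P2 \<otimes>\<^bsub>G\<^esub> Q2 \<otimes>\<^bsub>G\<^esub> inv\<^bsub>G\<^esub> PQ"
    unfolding conj_def P_mult_PQ by (simp add: G.m_assoc)
  then have "conj (PQ [^]\<^bsub>G\<^esub> k) = (P2 \<otimes>\<^bsub>G\<^esub> Q2 \<otimes>\<^bsub>G\<^esub> inv\<^bsub>G\<^esub> PQ) [^]\<^bsub>G\<^esub> k"
    using hom_int_pow[OF conj_hom G.m_closed[OF P_in_carrier Q_in_carrier] G.is_group G.is_group]
    by simp
  also have "\<dots> = (P2 \<otimes>\<^bsub>G\<^esub> Q2) [^]\<^bsub>G\<^esub> k \<otimes>\<^bsub>G\<^esub> (inv\<^bsub>G\<^esub> PQ) [^]\<^bsub>G\<^esub> k"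
    by (rule G.int_pow_mult_distrib) (simp_all add: centralD[OF central_P2Q2, of "inv\<^bsub>G\<^esub> PQ"])
  also have "\<dots> = (P2 \<otimes>\<^bsub>G\<^esub> Q2) [^]\<^bsub>G\<^esub> k \<otimes>\<^bsub>G\<^esub> PQ [^]\<^bsub>G\<^esub> (- k)"
    by (simp add: G.int_pow_inv G.int_pow_neg)
  finally show ?thesis
    unfolding conj_def
    by (metis G.inv_closed G.int_pow_closed G.inv_solve_right' G.m_closed P_in_carrier Q_in_carrier)
qed

definition sq_pow :: "int \<Rightarrow> int \<Rightarrow> word set" where
  "sq_pow i j = P2 [^]\<^bsub>G\<^esub> i \<otimes>\<^bsub>G\<^esub> Q2 [^]\<^bsub>G\<^esub> j"

definition even_elem :: "int \<Rightarrow> int \<Rightarrow> int \<Rightarrow> word set" where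
  "even_elem i j k = sq_pow i j \<otimes>\<^bsub>G\<^esub> PQ [^]\<^bsub>G\<^esub> k"

definition coord_elem :: "coord \<Rightarrow> word set" where
  "coord_elem t = (case t of (i, j, k, e) \<Rightarrow> even_elem i j k \<otimes>\<^bsub>G\<^esub> (if e then P else \<one>\<^bsub>G\<^esub>))"

lemma central_sq_pow: "central G (sq_pow i j)"
  unfolding sq_pow_def by (intro G.central_mult G.central_int_pow central_P2 central_Q2)

lemma sq_pow_in_carrier [simp]: "sq_pow i j \<in> carrier G"
  using central_in_carrier[OF central_sq_pow] .

lemma even_elem_in_carrier [simp]: "even_elem i j k \<in> carrier G"
  by (simp add: even_elem_def)

lemma coord_elem_in_carrier [simp]: "coord_elem t \<in> carrier G"
  by (cases t) (simp add: coord_elem_def)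

lemma sq_pow_mult: "sq_pow i j \<otimes>\<^bsub>G\<^esub> sq_pow i' j' = sq_pow (i + i') (j + j')"
proof -
  have "sq_pow i j \<otimes>\<^bsub>G\<^esub> sq_pow i' j' =
        P2 [^]\<^bsub>G\<^esub> i \<otimes>\<^bsub>G\<^esub> (Q2 [^]\<^bsub>G\<^esub> j \<otimes>\<^bsub>G\<^esub> P2 [^]\<^bsub>G\<^esub> i') \<otimes>\<^bsub>G\<^esub> Q2 [^]\<^bsub>G\<^esub> j'"
    by (simp add: sq_pow_def G.m_assoc)
  also have "Q2 [^]\<^bsub>G\<^esub> j \<otimes>\<^bsub>G\<^esub> P2 [^]\<^bsub>G\<^esub> i' = P2 [^]\<^bsub>G\<^esub> i' \<otimes>\<^bsub>G\<^esub> Q2 [^]\<^bsub>G\<^esub> j"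
    by (rule centralD[OF G.central_int_pow[OF central_Q2]]) simp
  finally show ?thesis
    by (simp add: sq_pow_def G.m_assoc G.int_pow_mult)
qed

lemma P2Q2_int_pow: "(P2 \<otimes>\<^bsub>G\<^esub> Q2) [^]\<^bsub>G\<^esub> k = sq_pow k k" for k :: int
proof -
  have "P2 \<otimes>\<^bsub>G\<^esub> Q2 = Q2 \<otimes>\<^bsub>G\<^esub> P2"
    by (rule centralD[OF central_P2]) simp
  then show ?thesis
    unfolding sq_pow_def by (rule G.int_pow_mult_distrib) simp_all
qed

lemma even_elem_mult: "even_elem i j k \<otimes>\<^bsub>G\<^esub> even_elem i' j' k' = even_elem (i + i') (j + j') (k + k')"
proof -
  have "even_elem i j k \<otimes>\<^bsub>G\<^esub> even_elem i' j' k' =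
        sq_pow i j \<otimes>\<^bsub>G\<^esub> (PQ [^]\<^bsub>G\<^esub> k \<otimes>\<^bsub>G\<^esub> sq_pow i' j') \<otimes>\<^bsub>G\<^esub> PQ [^]\<^bsub>G\<^esub> k'"
    by (simp add: even_elem_def G.m_assoc)
  also have "PQ [^]\<^bsub>G\<^esub> k \<otimes>\<^bsub>G\<^esub> sq_pow i' j' = sq_pow i' j' \<otimes>\<^bsub>G\<^esub> PQ [^]\<^bsub>G\<^esub> k"
    by (rule centralD[OF central_sq_pow, symmetric]) simp
  finally show ?thesis
    by (simp add: even_elem_def G.m_assoc G.int_pow_mult flip: sq_pow_mult)
qed

lemma P_mult_even_elem: "P \<otimes>\<^bsub>G\<^esub> even_elem i j k = even_elem (i + k) (j + k) (- k) \<otimes>\<^bsub>G\<^esub> P"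
proof -
  have "P \<otimes>\<^bsub>G\<^esub> even_elem i j k = sq_pow i j \<otimes>\<^bsub>G\<^esub> (P \<otimes>\<^bsub>G\<^esub> PQ [^]\<^bsub>G\<^esub> k)"
    using centralD[OF central_sq_pow P_in_carrier, of i j]
    by (simp add: even_elem_def G.m_assoc[symmetric])
  also have "\<dots> = sq_pow i j \<otimes>\<^bsub>G\<^esub> sq_pow k k \<otimes>\<^bsub>G\<^esub> PQ [^]\<^bsub>G\<^esub> (- k) \<otimes>\<^bsub>G\<^esub> P"
    by (simp only: P_mult_PQ_pow P2Q2_int_pow) (simp add: G.m_assoc)
  finally show ?thesis
    by (simp add: sq_pow_mult even_elem_def)
qed

lemma coord_elem_mult: "coord_elem s \<otimes>\<^bsub>G\<^esub> coord_elem t = coord_elem (coord_mult s t)"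
proof -
  obtain i j k e i' j' k' e' where s: "s = (i, j, k, e)" and t: "t = (i', j', k', e')"
    by (cases s, cases t)
  define P_e where "P_e = (if e' then P else \<one>\<^bsub>G\<^esub>)"
  have P_e: "P_e \<in> carrier G" by (simp add: P_e_def)
  show ?thesis
  proof (cases e)
    case False
    then show ?thesis
      by (simp add: s t coord_elem_def G.m_assoc flip: even_elem_mult)
  next
    case True
    have "coord_elem s \<otimes>\<^bsub>G\<^esub> coord_elem t =
          even_elem i j k \<otimes>\<^bsub>G\<^esub> (P \<otimes>\<^bsub>G\<^esub> even_elem i' j' k') \<otimes>\<^bsub>G\<^esub> P_e"
      by (simp add: s t True coord_elem_def P_e_def G.m_assoc)
    also have "\<dots> = even_elem i j k \<otimes>\<^bsub>G\<^esub> even_elem (i' + k') (j' + k') (- k') \<otimes>\<^bsub>G\<^esub> (P \<otimes>\<^bsub>G\<^esub> P_e)"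
      by (simp add: P_mult_even_elem P_e G.m_assoc)
    also have "\<dots> = even_elem (i + i' + k') (j + j' + k') (k - k') \<otimes>\<^bsub>G\<^esub> (P \<otimes>\<^bsub>G\<^esub> P_e)"
      by (simp add: even_elem_mult add.assoc)
    also have "\<dots> = coord_elem (coord_mult s t)"
    proof (cases e')
      case True
      have "P \<otimes>\<^bsub>G\<^esub> P_e = even_elem 1 0 0" by (simp add: P_e_def True even_elem_def sq_pow_def)
      then show ?thesis
        by (simp add: s t \<open>e\<close> True coord_elem_def even_elem_mult)
    qed (simp add: s t \<open>e\<close> P_e_def coord_elem_def)
    finally show ?thesis .
  qed
qed

lemma coord_elem_one: "coord_elem coord_one = \<one>\<^bsub>G\<^esub>"
  by (simp add: coord_one_def coord_elem_def even_elem_def sq_pow_def)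

lemma coord_elem_P: "coord_elem (0, 0, 0, True) = P"
  by (simp add: coord_elem_def even_elem_def sq_pow_def)

lemma coord_elem_Q: "coord_elem (0, 1, -1, True) = Q"
proof -
  have "coord_elem (0, 1, -1, True) = Q2 \<otimes>\<^bsub>G\<^esub> inv\<^bsub>G\<^esub> PQ \<otimes>\<^bsub>G\<^esub> P"
    by (simp add: coord_elem_def even_elem_def sq_pow_def G.int_pow_neg)
  also have "\<dots> = Q \<otimes>\<^bsub>G\<^esub> (Q \<otimes>\<^bsub>G\<^esub> inv\<^bsub>G\<^esub> Q) \<otimes>\<^bsub>G\<^esub> (inv\<^bsub>G\<^esub> P \<otimes>\<^bsub>G\<^esub> P)"
    by (simp add: G.m_assoc G.inv_mult_group)
  finally show ?thesis by simp
qed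

lemma coord_elem_letter: "coord_elem (letter_coord l) = word_class R [l]"
proof -
  have P: "word_class R [gen_P] = P" and Q: "word_class R [gen_Q] = Q"
    by (simp_all add: C_P_def C_Q_def)
  have inv_P: "coord_elem (-1, 0, 0, True) = inv\<^bsub>G\<^esub> P"
    using coord_elem_mult[of "(-1, 0, 0, True)" "(0, 0, 0, True)"]
    by (intro G.inv_equality[symmetric]) (simp_all add: coord_elem_P coord_elem_one[unfolded coord_one_def])
  have inv_Q: "coord_elem (0, 0, -1, True) = inv\<^bsub>G\<^esub> Q"
    using coord_elem_mult[of "(0, 0, -1, True)" "(0, 1, -1, True)"]
    by (intro G.inv_equality[symmetric]) (simp_all add: coord_elem_Q coord_elem_one[unfolded coord_one_def])
  have "l \<in> {gen_P, gen_Q, inv_letter gen_P, inv_letter gen_Q}"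
    by (cases l) (auto simp: gen_P_def gen_Q_def inv_letter_def)
  then show ?thesis
    using word_class_inv_letter[of R gen_P] word_class_inv_letter[of R gen_Q]
    by (auto simp: letter_coord_def gen_P_def gen_Q_def inv_letter_def C_group_def
        coord_elem_P coord_elem_Q inv_P inv_Q simp flip: P Q)
qed

lemma word_class_eq_coord_elem: "word_class R w = coord_elem (word_coord w)"
proof (induction w)
  case Nil then show ?case by (simp add: coord_elem_one C_group_def one_presented_group)
next
  case (Cons l w)
  then show ?case
    using word_class_mult[of "[l]" w] by (simp add: coord_elem_letter[symmetric] coord_elem_mult)
qed

lemma carrier_eq_range_coord_elem: "carrier G = range coord_elem"
proof
  show "carrier G \<subseteq> range coord_elem"
    using word_class_eq_coord_elem by (auto simp: C_group_def carrier_presented_group)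
qed auto

end

locale C_pres_even =
  fixes A B n :: nat
  assumes A_pos: "A > 0" and B_pos: "B > 0" and n_pos: "n > 0"
begin

sublocale C_pres "2 * A" "2 * B" n .

text \<open>The relators force \<open>P\<^sup>2\<^sup>A = Q\<^sup>2\<^sup>B = (P\<^sup>2 Q\<^sup>2)\<^sup>n = 1\<close>, so the exponents \<open>(i, j)\<close> of
  \<open>P\<^sup>2\<^sup>i Q\<^sup>2\<^sup>j\<close> are determined modulo the following lattice.\<close>

definition rel_lattice :: "(int \<times> int) set" where
  "rel_lattice = {(x, y). \<exists>\<alpha> \<beta> \<delta>. x = \<alpha> * int A + \<delta> * int n \<and> y = \<beta> * int B + \<delta> * int n}"

lemma rel_latticeI: "(\<alpha> * int A + \<delta> * int n, \<beta> * int B + \<delta> * int n) \<in> rel_lattice"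
  unfolding rel_lattice_def by blast

lemma rel_lattice_zero: "(0, 0) \<in> rel_lattice"
  using rel_latticeI[of 0 0 0] by simp

lemma rel_lattice_A: "(int A, 0) \<in> rel_lattice"
  using rel_latticeI[of 1 0 0] by simp

lemma rel_lattice_B: "(0, int B) \<in> rel_lattice"
  using rel_latticeI[of 0 0 1] by simp

lemma rel_lattice_n: "(int n, int n) \<in> rel_lattice"
  using rel_latticeI[of 0 1 0] by simp

lemma rel_lattice_add:
  assumes "(x, y) \<in> rel_lattice" and "(x', y') \<in> rel_lattice"
  shows "(x + x', y + y') \<in> rel_lattice"
proof -
  obtain \<alpha> \<beta> \<delta> where "x = \<alpha> * int A + \<delta> * int n" "y = \<beta> * int B + \<delta> * int n"
    using assms(1) by (auto simp: rel_lattice_def)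
  moreover obtain \<alpha>' \<beta>' \<delta>' where "x' = \<alpha>' * int A + \<delta>' * int n" "y' = \<beta>' * int B + \<delta>' * int n"
    using assms(2) by (auto simp: rel_lattice_def)
  ultimately show ?thesis
    using rel_latticeI[of "\<alpha> + \<alpha>'" "\<delta> + \<delta>'" "\<beta> + \<beta>'"] by (simp add: algebra_simps)
qed

lemma rel_lattice_smult:
  assumes "(x, y) \<in> rel_lattice"
  shows "(c * x, c * y) \<in> rel_lattice"
proof -
  from assms obtain \<alpha> \<beta> \<delta> where "x = \<alpha> * int A + \<delta> * int n" "y = \<beta> * int B + \<delta> * int n"
    by (auto simp: rel_lattice_def)
  then show ?thesis
    using rel_latticeI[of "c * \<alpha>" "c * \<delta>" "c * \<beta>"] by (simp add: algebra_simps)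
qed

lemma rel_lattice_neg: "(x, y) \<in> rel_lattice \<Longrightarrow> (- x, - y) \<in> rel_lattice"
  using rel_lattice_smult[of x y "-1"] by simp

lemma rel_lattice_lcm_B_n: "(int (lcm B n), 0) \<in> rel_lattice"
proof -
  have "B div gcd B n * n = n div gcd B n * B"
    using lcm_eq_div_gcd_mult[of B n] lcm_eq_div_gcd_mult[of n B] by (simp add: lcm.commute gcd.commute)
  then show ?thesis
    using rel_latticeI[of 0 "int (B div gcd B n)" "- int (n div gcd B n)"]
    by (simp add: lcm_eq_div_gcd_mult flip: of_nat_mult)
qed

lemma rel_lattice_lcm_A_n: "(0, int (lcm A n)) \<in> rel_lattice"
proof -
  have "A div gcd A n * n = n div gcd A n * A"
    using lcm_eq_div_gcd_mult[of A n] lcm_eq_div_gcd_mult[of n A] by (simp add: lcm.commute gcd.commute)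
  then show ?thesis
    using rel_latticeI[of "- int (n div gcd A n)" "int (A div gcd A n)" 0]
    by (simp add: lcm_eq_div_gcd_mult flip: of_nat_mult)
qed

definition coord_cong :: "coord \<Rightarrow> coord \<Rightarrow> bool" where
  "coord_cong s t = (case s of (i, j, k, e) \<Rightarrow> case t of (i', j', k', e') \<Rightarrow>
     e = e' \<and> int n dvd k - k' \<and> (i - i', j - j') \<in> rel_lattice)"

lemma coord_cong_refl: "coord_cong t t"
  by (cases t) (simp add: coord_cong_def rel_lattice_zero)

lemma coord_cong_sym: "coord_cong s t \<Longrightarrow> coord_cong t s"
  by (cases s; cases t) (auto simp: coord_cong_def dvd_diff_commute dest: rel_lattice_neg)

lemma coord_cong_trans: "coord_cong s t \<Longrightarrow> coord_cong t u \<Longrightarrow> coord_cong s u"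
proof (cases s; cases t; cases u)
  fix i j k e i' j' k' e' i'' j'' k'' e''
  assume st: "coord_cong s t" and tu: "coord_cong t u"
    and stu: "s = (i, j, k, e)" "t = (i', j', k', e')" "u = (i'', j'', k'', e'')"
  then show "coord_cong s u"
    using rel_lattice_add[of "i - i'" "j - j'" "i' - i''" "j' - j''"] dvd_add[of "int n" "k - k'" "k' - k''"]
    by (simp add: coord_cong_def)
qed

lemma coord_cong_mult_lattice:
  assumes "(x, y) \<in> rel_lattice"
  shows "coord_cong (coord_mult (coord_mult s (x, y, int n * c, False)) t) (coord_mult s t)"
proof -
  obtain i j k e i' j' k' e' where s: "s = (i, j, k, e)" and t: "t = (i', j', k', e')"
    by (cases s, cases t)
  have "(int n * c, int n * c) \<in> rel_lattice"
    using rel_lattice_smult[OF rel_lattice_n, of c] by (simp add: mult.commute)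
  with assms show ?thesis
    using rel_lattice_add by (cases e) (simp_all add: s t coord_cong_def algebra_simps)
qed

lemma word_coord_relator:
  assumes "r \<in> R"
  obtains x y c where "(x, y) \<in> rel_lattice" and "word_coord r = (x, y, int n * c, False)"
proof -
  consider "r = replicate (2 * A) gen_P" | "r = replicate (2 * B) gen_Q"
    | "r = concat (replicate n [gen_P, gen_Q])"
    | "word_coord r = coord_one"
    using assms word_coord_P2_commutator word_coord_Q2_commutator
    by (auto simp: C_relators_def)
  then show ?thesis
  proof cases
    case 1 with that[of "int A" 0 0] show ?thesis using rel_lattice_A by (simp add: word_coord_P_power)
  next
    case 2 with that[of 0 "int B" 0] show ?thesis using rel_lattice_B by (simp add: word_coord_Q_power)
  next
    case 3 with that[of 0 0 1] show ?thesis using rel_lattice_zero by (simp add: word_coord_PQ_power)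
  next
    case 4 with that[of 0 0 0] show ?thesis using rel_lattice_zero by (simp add: coord_one_def)
  qed
qed

lemma coord_cong_if_pres_eq: "pres_eq R u v \<Longrightarrow> coord_cong (word_coord u) (word_coord v)"
proof (induction rule: pres_eq.induct)
  case (refl w) then show ?case by (rule coord_cong_refl)
next
  case (sym u v) then show ?case by (blast intro: coord_cong_sym)
next
  case (trans u v w) then show ?case by (blast intro: coord_cong_trans)
next
  case (cancel u x v)
  have "word_coord (u @ [x, inv_letter x] @ v) =
        coord_mult (word_coord u) (coord_mult (coord_mult (letter_coord x) (letter_coord (inv_letter x))) (word_coord v))"
    by (simp add: word_coord_append coord_mult_assoc)
  then show ?case by (simp add: letter_coord_mult_inv_letter word_coord_append coord_cong_refl)
next
  case (relator r u v)
  then obtain x y c where "(x, y) \<in> rel_lattice" and "word_coord r = (x, y, int n * c, False)"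
    by (rule word_coord_relator)
  then have "coord_cong (coord_mult (coord_mult (word_coord u) (word_coord r)) (word_coord v))
      (coord_mult (word_coord u) (word_coord v))"
    by (simp add: coord_cong_mult_lattice)
  then show ?case by (simp add: word_coord_append coord_mult_assoc)
qed

text \<open>These turn out to be the orders of \<open>P\<^sup>2\<close> and of \<open>Q\<^sup>2\<close>, and the order of \<open>Q\<^sup>2\<close> modulo
  \<open>\<langle>P\<^sup>2\<rangle>\<close>.\<close>

definition ord_P2 :: nat where "ord_P2 = gcd A (lcm B n)"
definition ord_Q2 :: nat where "ord_Q2 = gcd B (lcm A n)"
definition ord_Q2_mod_P2 :: nat where "ord_Q2_mod_P2 = gcd B n"

lemma ord_P2_pos: "ord_P2 > 0"
  using A_pos by (simp add: ord_P2_def)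

lemma ord_Q2_mod_P2_pos: "ord_Q2_mod_P2 > 0"
  using n_pos by (simp add: ord_Q2_mod_P2_def)

lemma rel_lattice_ord_P2: "(int ord_P2, 0) \<in> rel_lattice"
proof -
  obtain u v where "u * int A + v * int (lcm B n) = int ord_P2"
    using bezout_int[of "int A" "int (lcm B n)"] by (auto simp: ord_P2_def)
  then show ?thesis
    using rel_lattice_add[OF rel_lattice_smult[OF rel_lattice_A, of u]
        rel_lattice_smult[OF rel_lattice_lcm_B_n, of v]]
    by simp
qed

lemma rel_lattice_ord_Q2: "(0, int ord_Q2) \<in> rel_lattice"
proof -
  obtain u v where "u * int B + v * int (lcm A n) = int ord_Q2"
    using bezout_int[of "int B" "int (lcm A n)"] by (auto simp: ord_Q2_def)
  then show ?thesis
    using rel_lattice_add[OF rel_lattice_smult[OF rel_lattice_B, of u]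
        rel_lattice_smult[OF rel_lattice_lcm_A_n, of v]]
    by simp
qed

lemma rel_lattice_ord_Q2_mod_P2: "\<exists>x. (x, int ord_Q2_mod_P2) \<in> rel_lattice"
proof -
  obtain u v where "u * int B + v * int n = int ord_Q2_mod_P2"
    using bezout_int[of "int B" "int n"] by (auto simp: ord_Q2_mod_P2_def)
  then show ?thesis
    using rel_lattice_add[OF rel_lattice_smult[OF rel_lattice_B, of u]
        rel_lattice_smult[OF rel_lattice_n, of v]]
    by auto
qed

lemma ord_Q2_mod_P2_dvd_snd: "(x, y) \<in> rel_lattice \<Longrightarrow> int ord_Q2_mod_P2 dvd y"
  by (auto simp: rel_lattice_def ord_Q2_mod_P2_def)

lemma ord_P2_dvd_fst:
  assumes "(x, 0) \<in> rel_lattice"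
  shows "int ord_P2 dvd x"
proof -
  obtain \<alpha> \<beta> \<delta> where x: "x = \<alpha> * int A + \<delta> * int n" and "0 = \<beta> * int B + \<delta> * int n"
    using assms by (auto simp: rel_lattice_def)
  then have "\<delta> * int n = - (\<beta> * int B)"
    by simp
  then have "int B dvd \<delta> * int n"
    by simp
  then have "lcm (int B) (int n) dvd \<delta> * int n"
    by (rule lcm_least) simp
  then have "int ord_P2 dvd \<delta> * int n"
    by (rule dvd_trans[rotated]) (simp add: ord_P2_def)
  moreover have "int ord_P2 dvd \<alpha> * int A"
    by (simp add: ord_P2_def)
  ultimately show ?thesis
    by (simp add: x)
qed

definition normal_coords :: "coord set" where
  "normal_coords = {0..<int ord_P2} \<times> {0..<int ord_Q2_mod_P2} \<times> {0..<int n} \<times> UNIV"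

definition central_normal_coords :: "coord set" where
  "central_normal_coords = {0..<int ord_P2} \<times> {0..<int ord_Q2_mod_P2} \<times> {0} \<times> {False}"

lemma card_normal_coords: "card normal_coords = ord_P2 * ord_Q2_mod_P2 * n * 2"
  by (simp add: normal_coords_def card_cartesian_product)

lemma card_central_normal_coords: "card central_normal_coords = ord_P2 * ord_Q2_mod_P2"
  by (simp add: central_normal_coords_def card_cartesian_product)

lemma central_normal_coords_subset: "central_normal_coords \<subseteq> normal_coords"
  using n_pos by (auto simp: central_normal_coords_def normal_coords_def)

text \<open>Subtracting a multiple of a lattice vector \<open>(x, ord_Q2_mod_P2)\<close> reduces \<open>j\<close>; then \<open>i\<close> is
  reduced modulo \<open>ord_P2\<close>.\<close>

definition normalize :: "coord \<Rightarrow> coord" where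
  "normalize t = (case t of (i, j, k, e) \<Rightarrow>
     let x = SOME x. (x, int ord_Q2_mod_P2) \<in> rel_lattice
     in ((i - j div int ord_Q2_mod_P2 * x) mod int ord_P2, j mod int ord_Q2_mod_P2, k mod int n, e))"

lemma normalize_in_normal_coords: "normalize t \<in> normal_coords"
  using ord_P2_pos ord_Q2_mod_P2_pos n_pos
  by (cases t) (simp add: normalize_def normal_coords_def Let_def)

lemma normalize_central: "normalize (i, j, 0, False) \<in> central_normal_coords"
  using ord_P2_pos ord_Q2_mod_P2_pos by (simp add: normalize_def central_normal_coords_def Let_def)

lemma coord_cong_normalize: "coord_cong t (normalize t)"
proof -
  obtain i j k e where t: "t = (i, j, k, e)" by (cases t)
  define x where "x = (SOME x. (x, int ord_Q2_mod_P2) \<in> rel_lattice)"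
  define m where "m = j div int ord_Q2_mod_P2"
  define i' where "i' = i - m * x"
  have "(m * x, m * int ord_Q2_mod_P2) \<in> rel_lattice"
    unfolding x_def by (rule rel_lattice_smult, rule someI_ex, rule rel_lattice_ord_Q2_mod_P2)
  then have "(m * x + i' div int ord_P2 * int ord_P2, m * int ord_Q2_mod_P2 + 0) \<in> rel_lattice"
    using rel_lattice_add[OF _ rel_lattice_smult[OF rel_lattice_ord_P2, of "i' div int ord_P2"]] by simp
  moreover have "i - i' mod int ord_P2 = m * x + i' div int ord_P2 * int ord_P2"
    by (simp add: i'_def minus_mod_eq_mult_div[symmetric] algebra_simps)
  moreover have "j - j mod int ord_Q2_mod_P2 = m * int ord_Q2_mod_P2"
    by (simp add: m_def minus_mod_eq_mult_div[symmetric] algebra_simps)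
  ultimately show ?thesis
    by (simp add: t normalize_def coord_cong_def Let_def mod_eq_dvd_iff[symmetric]
        flip: x_def m_def i'_def)
qed

lemma eq_if_coord_cong_normal:
  assumes s: "s \<in> normal_coords" and t: "t \<in> normal_coords" and st: "coord_cong s t"
  shows "s = t"
proof -
  obtain i j k e i' j' k' e' where s': "s = (i, j, k, e)" and t': "t = (i', j', k', e')"
    by (cases s, cases t)
  from st have e: "e = e'" and kk: "int n dvd k - k'" and L: "(i - i', j - j') \<in> rel_lattice"
    by (auto simp: s' t' coord_cong_def)
  have k: "k = k'"
    using s t kk by (auto simp: s' t' normal_coords_def intro: eq_if_dvd_diff_in_range)
  have j: "j = j'"
    using s t ord_Q2_mod_P2_dvd_snd[OF L] by (auto simp: s' t' normal_coords_def intro: eq_if_dvd_diff_in_range)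
  have "int ord_P2 dvd i - i'"
    using ord_P2_dvd_fst L j by simp
  then have i: "i = i'"
    using s t by (auto simp: s' t' normal_coords_def intro: eq_if_dvd_diff_in_range)
  show ?thesis by (simp add: s' t' e k j i)
qed

lemma P2_int_pow_A: "P2 [^]\<^bsub>G\<^esub> int A = \<one>\<^bsub>G\<^esub>"
proof -
  have "P2 [^]\<^bsub>G\<^esub> int A = (P [^]\<^bsub>G\<^esub> (2::nat)) [^]\<^bsub>G\<^esub> A"
    by (simp add: int_pow_int P_pow_two)
  also have "\<dots> = \<one>\<^bsub>G\<^esub>"
    by (simp add: G.nat_pow_pow P_pow_p)
  finally show ?thesis .
qed

lemma Q2_int_pow_B: "Q2 [^]\<^bsub>G\<^esub> int B = \<one>\<^bsub>G\<^esub>"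
proof -
  have "Q2 [^]\<^bsub>G\<^esub> int B = (Q [^]\<^bsub>G\<^esub> (2::nat)) [^]\<^bsub>G\<^esub> B"
    by (simp add: int_pow_int Q_pow_two)
  also have "\<dots> = \<one>\<^bsub>G\<^esub>"
    by (simp add: G.nat_pow_pow Q_pow_q)
  finally show ?thesis .
qed

lemma PQ_int_pow_n: "PQ [^]\<^bsub>G\<^esub> int n = \<one>\<^bsub>G\<^esub>"
  using PQ_pow_n by (simp add: int_pow_int)

text \<open>Conjugate \<open>(PQ)\<^sup>n = 1\<close> by \<open>P\<close>.\<close>

lemma P2Q2_int_pow_n: "(P2 \<otimes>\<^bsub>G\<^esub> Q2) [^]\<^bsub>G\<^esub> int n = \<one>\<^bsub>G\<^esub>"
proof -
  have "P = (P2 \<otimes>\<^bsub>G\<^esub> Q2) [^]\<^bsub>G\<^esub> int n \<otimes>\<^bsub>G\<^esub> P"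
    using P_mult_PQ_pow[of "int n"] PQ_int_pow_n by (simp add: G.int_pow_neg)
  then show ?thesis
    by (metis G.int_pow_closed G.l_one G.m_closed G.right_cancel G.one_closed P_in_carrier Q_in_carrier)
qed

lemma sq_pow_lattice: "(u, v) \<in> rel_lattice \<Longrightarrow> sq_pow u v = \<one>\<^bsub>G\<^esub>"
proof -
  assume "(u, v) \<in> rel_lattice"
  then obtain \<alpha> \<beta> \<delta> where "u = int A * \<alpha> + int n * \<delta>" and "v = int B * \<beta> + int n * \<delta>"
    by (auto simp: rel_lattice_def mult.commute)
  then have "sq_pow u v = sq_pow (int A * \<alpha>) 0 \<otimes>\<^bsub>G\<^esub> sq_pow 0 (int B * \<beta>) \<otimes>\<^bsub>G\<^esub> sq_pow (int n * \<delta>) (int n * \<delta>)"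
    by (simp add: sq_pow_mult)
  moreover have "sq_pow (int A * \<alpha>) 0 = \<one>\<^bsub>G\<^esub>" "sq_pow 0 (int B * \<beta>) = \<one>\<^bsub>G\<^esub>"
    by (simp_all add: sq_pow_def G.int_pow_pow[symmetric] P2_int_pow_A Q2_int_pow_B)
  moreover have "sq_pow (int n * \<delta>) (int n * \<delta>) = \<one>\<^bsub>G\<^esub>"
    unfolding P2Q2_int_pow[symmetric] by (simp add: G.int_pow_pow[symmetric] P2Q2_int_pow_n)
  ultimately show ?thesis by simp
qed

lemma coord_elem_cong: "coord_cong s t \<Longrightarrow> coord_elem s = coord_elem t"
proof -
  assume st: "coord_cong s t"
  obtain i j k e i' j' k' e' where s: "s = (i, j, k, e)" and t: "t = (i', j', k', e')"
    by (cases s, cases t)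
  from st have "e = e'" and "int n dvd k - k'" and L: "(i - i', j - j') \<in> rel_lattice"
    by (auto simp: s t coord_cong_def)
  moreover obtain \<gamma> where "k - k' = int n * \<gamma>"
    using \<open>int n dvd k - k'\<close> by (rule dvdE)
  ultimately have "s = coord_mult (i - i', j - j', int n * \<gamma>, False) t"
    by (simp add: s t)
  then have "coord_elem s = coord_elem (i - i', j - j', int n * \<gamma>, False) \<otimes>\<^bsub>G\<^esub> coord_elem t"
    by (simp add: coord_elem_mult)
  also have "coord_elem (i - i', j - j', int n * \<gamma>, False) = \<one>\<^bsub>G\<^esub>"
    by (simp add: coord_elem_def even_elem_def sq_pow_lattice[OF L] G.int_pow_pow[symmetric] PQ_int_pow_n)
  finally show ?thesis by simp
qed

lemma coord_elem_normalize: "coord_elem (normalize t) = coord_elem t"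
  by (rule coord_elem_cong[OF coord_cong_normalize, symmetric])

lemma inj_on_coord_elem: "inj_on coord_elem normal_coords"
proof (rule inj_onI)
  fix s t assume s: "s \<in> normal_coords" and t: "t \<in> normal_coords"
    and st: "coord_elem s = coord_elem t"
  have "word_coord (coord_word s) = s" "word_coord (coord_word t) = t"
    using s t by (auto simp: normal_coords_def intro!: word_coord_coord_word)
  moreover have "pres_eq R (coord_word s) (coord_word t)"
    using st calculation by (simp add: word_class_eq_coord_elem flip: word_class_eq_iff)
  ultimately have "coord_cong s t"
    using coord_cong_if_pres_eq by metis
  with s t show "s = t" by (rule eq_if_coord_cong_normal)
qed

lemma carrier_eq_coord_elem_normal: "carrier G = coord_elem ` normal_coords"
proof
  show "carrier G \<subseteq> coord_elem ` normal_coords"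
  proof
    fix g assume "g \<in> carrier G"
    then obtain t where "g = coord_elem t"
      by (auto simp: carrier_eq_range_coord_elem)
    then have "g = coord_elem (normalize t)"
      by (simp add: coord_elem_normalize)
    then show "g \<in> coord_elem ` normal_coords"
      using normalize_in_normal_coords by blast
  qed
qed auto

lemma order_eq: "order G = ord_P2 * ord_Q2_mod_P2 * n * 2"
  by (simp add: order_def carrier_eq_coord_elem_normal card_image[OF inj_on_coord_elem] card_normal_coords)

subsection \<open>The subgroup generated by \<open>P\<^sup>2\<close> and \<open>Q\<^sup>2\<close>\<close>

abbreviation "sq_subgroup \<equiv> generate G {P [^]\<^bsub>G\<^esub> (2::nat), Q [^]\<^bsub>G\<^esub> (2::nat)}"

lemma subgroup_sq_subgroup: "subgroup sq_subgroup G"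
  by (rule G.generate_is_subgroup) simp

lemma inv_sq_pow: "inv\<^bsub>G\<^esub> sq_pow i j = sq_pow (- i) (- j)"
  by (rule G.inv_equality) (simp_all add: sq_pow_mult, simp add: sq_pow_def)

lemma sq_subgroup_subset: "h \<in> sq_subgroup \<Longrightarrow> \<exists>i j. h = sq_pow i j"
proof (induction rule: generate.induct)
  case one
  have "sq_pow 0 0 = \<one>\<^bsub>G\<^esub>" by (simp add: sq_pow_def)
  then show ?case by metis
next
  case (incl h)
  then have "h = sq_pow 1 0 \<or> h = sq_pow 0 1" by (auto simp: sq_pow_def P_pow_two Q_pow_two)
  then show ?case by blast
next
  case (inv h)
  then have "h = sq_pow 1 0 \<or> h = sq_pow 0 1" by (auto simp: sq_pow_def P_pow_two Q_pow_two)
  then show ?case by (metis inv_sq_pow)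
next
  case (eng h1 h2)
  then show ?case by (metis sq_pow_mult)
qed

lemma sq_pow_in_sq_subgroup: "sq_pow i j \<in> sq_subgroup"
proof -
  have "P2 \<in> sq_subgroup" "Q2 \<in> sq_subgroup"
    by (rule generate.incl, simp add: P_pow_two Q_pow_two)+
  then have "P2 [^]\<^bsub>G\<^esub> i \<in> sq_subgroup" "Q2 [^]\<^bsub>G\<^esub> j \<in> sq_subgroup"
    by (simp_all add: G.subgroup_int_pow_closed[OF subgroup_sq_subgroup])
  then show ?thesis
    by (simp add: sq_pow_def subgroup.m_closed[OF subgroup_sq_subgroup])
qed

lemma sq_subgroup_eq: "sq_subgroup = coord_elem ` central_normal_coords"
proof
  show "sq_subgroup \<subseteq> coord_elem ` central_normal_coords"
  proof
    fix h assume "h \<in> sq_subgroup"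
    then obtain i j where "h = sq_pow i j" using sq_subgroup_subset by blast
    also have "\<dots> = coord_elem (i, j, 0, False)"
      by (simp add: coord_elem_def even_elem_def)
    also have "\<dots> = coord_elem (normalize (i, j, 0, False))"
      by (simp add: coord_elem_normalize)
    finally have "h = coord_elem (normalize (i, j, 0, False))" .
    then show "h \<in> coord_elem ` central_normal_coords"
      using normalize_central by blast
  qed
  show "coord_elem ` central_normal_coords \<subseteq> sq_subgroup"
    by (auto simp: central_normal_coords_def coord_elem_def even_elem_def sq_pow_in_sq_subgroup)
qed

lemma sq_subgroup_central: "\<forall>s\<in>sq_subgroup. \<forall>g\<in>carrier G. s \<otimes>\<^bsub>G\<^esub> g = g \<otimes>\<^bsub>G\<^esub> s"
  using sq_subgroup_subset centralD[OF central_sq_pow] by blast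

lemma comm_group_sq_subgroup: "comm_group (G\<lparr>carrier := sq_subgroup\<rparr>)"
proof -
  interpret S: group "G\<lparr>carrier := sq_subgroup\<rparr>"
    by (rule subgroup.subgroup_is_group[OF subgroup_sq_subgroup G.is_group])
  show ?thesis
    by (rule S.group_comm_groupI)
       (use sq_subgroup_central subgroup.mem_carrier[OF subgroup_sq_subgroup] in auto)
qed

lemma card_sq_subgroup: "card sq_subgroup = ord_P2 * ord_Q2_mod_P2"
  using card_image[OF inj_on_subset[OF inj_on_coord_elem central_normal_coords_subset]]
  by (simp add: sq_subgroup_eq card_central_normal_coords)

subsection \<open>The quotient by \<open>\<langle>P\<^sup>2, Q\<^sup>2\<rangle>\<close>\<close>

definition dihedral_part :: "coord \<Rightarrow> int \<times> bool" where
  "dihedral_part t = (case t of (i, j, k, e) \<Rightarrow> (k mod int n, e))"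

definition dihedral_proj :: "word set \<Rightarrow> int \<times> bool" where
  "dihedral_proj g = dihedral_part (the_inv_into normal_coords coord_elem g)"

lemma dihedral_proj_coord_elem: "dihedral_proj (coord_elem t) = dihedral_part t"
proof -
  have "the_inv_into normal_coords coord_elem (coord_elem t) = normalize t"
    using the_inv_into_f_f[OF inj_on_coord_elem normalize_in_normal_coords, of t]
    by (simp add: coord_elem_normalize)
  then show ?thesis
    by (cases t) (simp add: dihedral_proj_def dihedral_part_def normalize_def Let_def)
qed

lemma dihedral_part_mult:
  "dihedral_part (coord_mult s t) = dihedral_part s \<otimes>\<^bsub>dihedral_group n\<^esub> dihedral_part t"
  by (cases s; cases t; cases "fst (snd (snd s))")
     (auto simp: dihedral_part_def dihedral_group_def mod_add_eq mod_diff_eq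
       simp flip: diff_conv_add_uminus)

lemma group_hom_dihedral_proj: "group_hom G (dihedral_group n) dihedral_proj"
proof -
  have "dihedral_proj \<in> hom G (dihedral_group n)"
  proof (rule homI)
    fix g assume "g \<in> carrier G"
    then obtain t where "g = coord_elem t" by (auto simp: carrier_eq_range_coord_elem)
    then show "dihedral_proj g \<in> carrier (dihedral_group n)"
      using n_pos by (cases t) (simp add: dihedral_proj_coord_elem dihedral_part_def dihedral_group_def)
  next
    fix g h assume "g \<in> carrier G" "h \<in> carrier G"
    then obtain s t where "g = coord_elem s" "h = coord_elem t" by (auto simp: carrier_eq_range_coord_elem)
    then show "dihedral_proj (g \<otimes>\<^bsub>G\<^esub> h) = dihedral_proj g \<otimes>\<^bsub>dihedral_group n\<^esub> dihedral_proj h"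
      by (simp add: coord_elem_mult dihedral_proj_coord_elem dihedral_part_mult)
  qed
  then show ?thesis
    using G.is_group group_dihedral_group[OF n_pos] by (simp add: group_hom_def group_hom_axioms_def)
qed

lemma dihedral_proj_surj: "dihedral_proj ` carrier G = carrier (dihedral_group n)"
proof
  show "dihedral_proj ` carrier G \<subseteq> carrier (dihedral_group n)"
    using group_hom.hom_closed[OF group_hom_dihedral_proj] by blast
  show "carrier (dihedral_group n) \<subseteq> dihedral_proj ` carrier G"
  proof
    fix y assume "y \<in> carrier (dihedral_group n)"
    then obtain k e where y: "y = (k, e)" and k: "0 \<le> k" "k < int n"
      by (auto simp: dihedral_group_def)
    then have "dihedral_proj (coord_elem (0, 0, k, e)) = y"
      by (simp add: dihedral_proj_coord_elem dihedral_part_def)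
    then show "y \<in> dihedral_proj ` carrier G"
      by (metis coord_elem_in_carrier image_eqI)
  qed
qed

lemma kernel_dihedral_proj: "kernel G (dihedral_group n) dihedral_proj = sq_subgroup"
proof -
  have "g \<in> kernel G (dihedral_group n) dihedral_proj \<longleftrightarrow> g \<in> sq_subgroup" if g: "g \<in> carrier G" for g
  proof -
    obtain t where t: "t \<in> normal_coords" "g = coord_elem t"
      using g carrier_eq_coord_elem_normal by auto
    obtain i j k e where tt: "t = (i, j, k, e)" by (cases t)
    have k: "0 \<le> k" "k < int n" using t(1) by (auto simp: tt normal_coords_def)
    have "g \<in> kernel G (dihedral_group n) dihedral_proj \<longleftrightarrow> k = 0 \<and> \<not> e"
      using g k by (simp add: kernel_def t(2) tt dihedral_proj_coord_elem dihedral_part_def dihedral_group_def)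
    also have "\<dots> \<longleftrightarrow> t \<in> central_normal_coords"
      using t(1) by (auto simp: tt central_normal_coords_def normal_coords_def)
    also have "\<dots> \<longleftrightarrow> g \<in> sq_subgroup"
      using inj_on_coord_elem t central_normal_coords_subset
      by (auto simp: sq_subgroup_eq inj_on_def)
    finally show ?thesis .
  qed
  moreover have "kernel G (dihedral_group n) dihedral_proj \<subseteq> carrier G"
    by (auto simp: kernel_def)
  moreover have "sq_subgroup \<subseteq> carrier G"
    using subgroup.subset[OF subgroup_sq_subgroup] .
  ultimately show ?thesis by blast
qed

lemma quotient_sq_subgroup_iso_dihedral: "G Mod sq_subgroup \<cong> dihedral_group n"
  using group_hom.FactGroup_iso[OF group_hom_dihedral_proj dihedral_proj_surj] kernel_dihedral_proj
  by simp

lemma gcd_p_lcm_q_2n: "gcd (2 * A) (lcm (2 * B) (2 * n)) = 2 * ord_P2"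
  by (simp add: ord_P2_def lcm_mult_left gcd_mult_left)

lemma gcd_q_lcm_p_2n: "gcd (2 * B) (lcm (2 * A) (2 * n)) = 2 * ord_Q2"
  by (simp add: ord_Q2_def lcm_mult_left gcd_mult_left)

lemma gcd_gcd_q_lcm_p_2n_2n: "gcd (gcd (2 * B) (lcm (2 * A) (2 * n))) (2 * n) = 2 * ord_Q2_mod_P2"
proof -
  have "gcd ord_Q2 n = ord_Q2_mod_P2"
    by (simp add: ord_Q2_def ord_Q2_mod_P2_def gcd.assoc)
  then show ?thesis
    by (simp add: gcd_q_lcm_p_2n gcd_mult_left)
qed

lemma P_pow_2n_mult_Q_pow_2n: "P [^]\<^bsub>G\<^esub> (2 * n) \<otimes>\<^bsub>G\<^esub> Q [^]\<^bsub>G\<^esub> (2 * n) = \<one>\<^bsub>G\<^esub>"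
proof -
  have "P [^]\<^bsub>G\<^esub> (2 * n) \<otimes>\<^bsub>G\<^esub> Q [^]\<^bsub>G\<^esub> (2 * n) = sq_pow (int n) (int n)"
    by (simp add: sq_pow_def int_pow_int G.nat_pow_pow[symmetric] P_pow_two Q_pow_two)
  also have "\<dots> = \<one>\<^bsub>G\<^esub>"
    using P2Q2_int_pow_n by (simp add: P2Q2_int_pow)
  finally show ?thesis .
qed

lemma P_pow_gcd_p_lcm_q_2n: "P [^]\<^bsub>G\<^esub> gcd (2 * A) (lcm (2 * B) (2 * n)) = \<one>\<^bsub>G\<^esub>"
  using sq_pow_lattice[OF rel_lattice_ord_P2]
  by (simp add: gcd_p_lcm_q_2n sq_pow_def int_pow_int G.nat_pow_pow[symmetric] P_pow_two)

lemma Q_pow_gcd_q_lcm_p_2n: "Q [^]\<^bsub>G\<^esub> gcd (2 * B) (lcm (2 * A) (2 * n)) = \<one>\<^bsub>G\<^esub>"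
  using sq_pow_lattice[OF rel_lattice_ord_Q2]
  by (simp add: gcd_q_lcm_p_2n sq_pow_def int_pow_int G.nat_pow_pow[symmetric] Q_pow_two)

text \<open>If \<open>p' \<equiv> q' \<equiv> 2 (mod 4)\<close>, then \<open>ord_P2\<close> and \<open>ord_Q2\<close> are odd, so for \<open>n = 2\<close> the
  vector \<open>(-1, -1)\<close> lies in the lattice. Then \<open>P\<^sup>2 Q\<^sup>2 = 1\<close> and \<open>PQ = P\<^sup>2 Q\<^sup>2 (PQ)\<^sup>-\<^sup>1 = QP\<close>.\<close>

lemma not_gcds_2_mod_4_and_n_2:
  assumes "P \<otimes>\<^bsub>G\<^esub> Q \<noteq> Q \<otimes>\<^bsub>G\<^esub> P"
  shows "\<not> (gcd (2 * A) (lcm (2 * B) (2 * n)) mod 4 = 2 \<and> gcd (2 * B) (lcm (2 * A) (2 * n)) mod 4 = 2 \<and> n = 2)"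
proof
  assume asm: "gcd (2 * A) (lcm (2 * B) (2 * n)) mod 4 = 2 \<and> gcd (2 * B) (lcm (2 * A) (2 * n)) mod 4 = 2 \<and> n = 2"
  then have n: "n = 2" by simp
  have "2 * ord_P2 mod 4 = 2" "2 * ord_Q2 mod 4 = 2"
    using asm unfolding gcd_p_lcm_q_2n gcd_q_lcm_p_2n by blast+
  then have "odd ord_P2" "odd ord_Q2"
    by presburger+
  then have "odd (int ord_P2 * int ord_Q2)"
    by simp
  then obtain w where w: "int ord_P2 * int ord_Q2 = 2 * w + 1"
    by (rule oddE)
  have "(- int ord_Q2 * int ord_P2 + (- int ord_P2) * 0 + w * int n,
         - int ord_Q2 * 0 + (- int ord_P2) * int ord_Q2 + w * int n) \<in> rel_lattice"
    by (intro rel_lattice_add rel_lattice_smult rel_lattice_ord_P2 rel_lattice_ord_Q2 rel_lattice_n)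
  then have "(- 1, - 1) \<in> rel_lattice"
    using w n by (simp add: algebra_simps)
  moreover have "int n dvd 2"
    using n by simp
  ultimately have "coord_elem (0, 0, 1, False) = coord_elem (1, 1, -1, False)"
    by (intro coord_elem_cong) (simp add: coord_cong_def)
  moreover have "coord_elem (0, 0, 1, False) = P \<otimes>\<^bsub>G\<^esub> Q"
    by (simp add: coord_elem_def even_elem_def sq_pow_def)
  moreover have "coord_elem (1, 1, -1, False) = Q \<otimes>\<^bsub>G\<^esub> P"
    using coord_elem_mult[of "(0, 1, -1, True)" "(0, 0, 0, True)"] by (simp add: coord_elem_Q coord_elem_P)
  ultimately show False
    using assms by simp
qed

lemma two_mult_order:
  "2 * order G = gcd (2 * A) (lcm (2 * B) (2 * n)) * gcd (gcd (2 * B) (lcm (2 * A) (2 * n))) (2 * n) * n"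
  by (simp add: order_eq gcd_p_lcm_q_2n gcd_gcd_q_lcm_p_2n_2n)

lemma four_mult_card_sq_subgroup:
  "4 * card sq_subgroup = gcd (2 * A) (lcm (2 * B) (2 * n)) * gcd (gcd (2 * B) (lcm (2 * A) (2 * n))) (2 * n)"
  by (simp add: card_sq_subgroup gcd_p_lcm_q_2n gcd_gcd_q_lcm_p_2n_2n)

end

theorem theorem6:
  fixes p q n :: nat
  defines "G \<equiv> C_group p q n"
      and "P \<equiv> C_P p q n"
      and "Q \<equiv> C_Q p q n"
      and "p' \<equiv> gcd p (lcm q (2 * n))"
      and "q' \<equiv> gcd q (lcm p (2 * n))"
      and "S \<equiv> generate (C_group p q n) {C_P p q n [^]\<^bsub>C_group p q n\<^esub> (2::nat), C_Q p q n [^]\<^bsub>C_group p q n\<^esub> (2::nat)}"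
  assumes "p > 0" and "q > 0" and "n > 0"
      and "P \<otimes>\<^bsub>G\<^esub> Q \<noteq> Q \<otimes>\<^bsub>G\<^esub> P"
  shows "even p \<and> even q
    \<and> P [^]\<^bsub>G\<^esub> (2 * n) \<otimes>\<^bsub>G\<^esub> Q [^]\<^bsub>G\<^esub> (2 * n) = \<one>\<^bsub>G\<^esub>
    \<and> P [^]\<^bsub>G\<^esub> p' = \<one>\<^bsub>G\<^esub> \<and> Q [^]\<^bsub>G\<^esub> q' = \<one>\<^bsub>G\<^esub>
    \<and> \<not> (p' mod 4 = 2 \<and> q' mod 4 = 2 \<and> n = 2)
    \<and> 2 * order G = p' * gcd q' (2 * n) * n
    \<and> comm_group (G\<lparr>carrier := S\<rparr>)
    \<and> (\<forall>s\<in>S. \<forall>g\<in>carrier G. s \<otimes>\<^bsub>G\<^esub> g = g \<otimes>\<^bsub>G\<^esub> s)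
    \<and> 4 * card S = p' * gcd q' (2 * n)
    \<and> G Mod S \<cong> dihedral_group n"
proof -
  have noncomm: "C_P p q n \<otimes>\<^bsub>C_group p q n\<^esub> C_Q p q n \<noteq> C_Q p q n \<otimes>\<^bsub>C_group p q n\<^esub> C_P p q n"
    using assms(10) by (simp add: G_def P_def Q_def)
  have "even p" "even q"
    using C_pres.even_p_if_noncommuting[OF noncomm] C_pres.even_q_if_noncommuting[OF noncomm] .
  then obtain A B where p: "p = 2 * A" and q: "q = 2 * B"
    by (auto elim!: evenE)
  interpret C_pres_even A B n
    using assms(7-9) by unfold_locales (simp_all add: p q)
  show ?thesis
    unfolding G_def P_def Q_def p'_def q'_def S_def p q
    using P_pow_2n_mult_Q_pow_2n P_pow_gcd_p_lcm_q_2n Q_pow_gcd_q_lcm_p_2n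
      not_gcds_2_mod_4_and_n_2[OF noncomm[unfolded p q]] two_mult_order comm_group_sq_subgroup
      sq_subgroup_central four_mult_card_sq_subgroup quotient_sq_subgroup_iso_dihedral
    by simp
qed

end
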